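(* Let a General Utility Markov Game (see context) satisfy (A1) for every $i$ and every $\pi_{-i}\in\Pi_{-i}$, $(\lambda_1,\dots,\lambda_N)\mapsto F_i(\lambda_1,\dots,\lambda_N,\pi_{-i})$ is jointly concave, and (A2) $d_\mu^\pi(s)>0$ for all $\pi\in\Pi$, $s\in\mathcal S$. Let $v(\pi)=(\nabla_{\pi_i}u_{\mu,i}(\pi))_{i\in\mathcal N}$. Then $\pi^\star\in\Pi$ is a Nash equilibrium if and only if $\pi^\star=\mathrm{Proj}_\Pi(\pi^\star+\eta\,v(\pi^\star))$ for all $\eta>0$, equivalently if and only if $\pi_i^\star=\mathrm{Proj}_{\Pi_i}(\pi_i^\star+\eta\,\nabla_{\pi_i}u_{\mu,i}(\pi^\star))$ for all $i\in\mathcal N$ and all $\eta>0$, where $\mathrm{Proj}$ denotes Euclidean projection.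
   Context: A GUMG consists of: agents $\mathcal N=\{1,\dots,N\}$; finite state space $\mathcal S$; finite action sets $\mathcal A_i$, joint $\mathcal A=\prod_i\mathcal A_i$; transition kernel $P:\mathcal S\times\mathcal A\to\Delta(\mathcal S)$; initial distribution $\mu$; discount $\gamma\in(0,1)$; differentiable $F_i:\Lambda\times\Pi_{-i}\to\mathbb R$, $\Lambda=\prod_i\Delta(\mathcal S\times\mathcal A_i)$. Policies $\Pi_i=\Delta(\mathcal A_i)^{\mathcal S}$ as vectors $(\pi_i(a_i|s))$ in Euclidean space; $\Pi=\prod_i\Pi_i$; $\pi(a|s)=\prod_i\pi_i(a_i|s)$. With $\mathbb P_{\mu,\pi}$ the law of the induced chain ($s_0\sim\mu$): $d_\mu^\pi(s)=(1-\gamma)\sum_t\gamma^t\mathbb P_{\mu,\pi}(s_t=s)$, $\lambda_{\mu,i}^\pi(s,a_i)=(1-\gamma)\sum_t\gamma^t\mathbb P_{\mu,\pi}(s_t=s,a_{i,t}=a_i)$. Utilities $u_{\mu,i}(\pi)=F_i(\lambda_{\mu,1}^\pi,\dots,\lambda_{\mu,N}^\pi,\pi_{-i})$; $\nabla_{\pi_i}$ is the gradient w.r.t. coordinates $\pi_i(a_i|s)$. $\pi^\star$ is a Nash equilibrium if $u_{\mu,i}(\pi_i',\pi^\star_{-i})\le u_{\mu,i}(\pi^\star)$ for all $i$ and $\pi_i'\in\Pi_i$. *)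

theory Defs
  imports "HOL-Analysis.Analysis"
begin

text \<open>All agents' actions
live in a common finite type 'a; agent i's action set is A i. A policy of agent i is an
element of real^'a^'s (coordinates p$s$a = pi_i(a|s)); coordinates with a outside A i are
forced to be 0, so the Euclidean space R^(S x A_i) is embedded isometrically.\<close>

definition joint_actions :: "('n \<Rightarrow> 'a set) \<Rightarrow> ('n \<Rightarrow> 'a) set" where
  "joint_actions A = {a. \<forall>i. a i \<in> A i}"

definition policy_set :: "'a::finite set \<Rightarrow> (real^'a^'s::finite) set" where
  "policy_set B = {p. \<forall>s. (\<forall>a. 0 \<le> p$s$a) \<and> (\<forall>a. a \<notin> B \<longrightarrow> p$s$a = 0)
                          \<and> (\<Sum>a\<in>B. p$s$a) = 1}"

definition profile_set :: "('n::finite \<Rightarrow> 'a::finite set) \<Rightarrow> (real^'a^'s::finite^'n) set" where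
  "profile_set A = {\<pi>. \<forall>i. \<pi>$i \<in> policy_set (A i)}"

definition occ_set :: "('n::finite \<Rightarrow> 'a::finite set) \<Rightarrow> (real^'a^'s::finite^'n) set" where
  "occ_set A = {l. \<forall>i. (\<forall>s a. 0 \<le> l$i$s$a) \<and> (\<forall>s a. a \<notin> A i \<longrightarrow> l$i$s$a = 0)
                        \<and> (\<Sum>s\<in>UNIV. \<Sum>a\<in>A i. l$i$s$a) = 1}"

definition joint_prob :: "real^'a::finite^'s::finite^'n::finite \<Rightarrow> 's \<Rightarrow> ('n \<Rightarrow> 'a) \<Rightarrow> real" where
  "joint_prob \<pi> s a = (\<Prod>i\<in>UNIV. \<pi>$i$s$(a i))"

fun state_dist :: "('n::finite \<Rightarrow> 'a::finite set) \<Rightarrow> ('s::finite \<Rightarrow> ('n \<Rightarrow> 'a) \<Rightarrow> 's \<Rightarrow> real)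
    \<Rightarrow> ('s \<Rightarrow> real) \<Rightarrow> real^'a^'s^'n \<Rightarrow> nat \<Rightarrow> 's \<Rightarrow> real" where
  "state_dist A P \<mu> \<pi> 0 s = \<mu> s"
| "state_dist A P \<mu> \<pi> (Suc t) s' =
     (\<Sum>s\<in>UNIV. \<Sum>a\<in>joint_actions A. state_dist A P \<mu> \<pi> t s * joint_prob \<pi> s a * P s a s')"

definition disc_state_occ :: "('n::finite \<Rightarrow> 'a::finite set) \<Rightarrow> ('s::finite \<Rightarrow> ('n \<Rightarrow> 'a) \<Rightarrow> 's \<Rightarrow> real)
    \<Rightarrow> ('s \<Rightarrow> real) \<Rightarrow> real \<Rightarrow> real^'a^'s^'n \<Rightarrow> 's \<Rightarrow> real" where
  "disc_state_occ A P \<mu> \<gamma> \<pi> s = (1 - \<gamma>) * (\<Sum>t. \<gamma>^t * state_dist A P \<mu> \<pi> t s)"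

definition occ_measure :: "('n::finite \<Rightarrow> 'a::finite set) \<Rightarrow> ('s::finite \<Rightarrow> ('n \<Rightarrow> 'a) \<Rightarrow> 's \<Rightarrow> real)
    \<Rightarrow> ('s \<Rightarrow> real) \<Rightarrow> real \<Rightarrow> real^'a^'s^'n \<Rightarrow> real^'a^'s^'n" where
  "occ_measure A P \<mu> \<gamma> \<pi> = (\<chi> i. \<chi> s. \<chi> b. (1 - \<gamma>) *
      (\<Sum>t. \<gamma>^t * (\<Sum>a\<in>{a\<in>joint_actions A. a i = b}. state_dist A P \<mu> \<pi> t s * joint_prob \<pi> s a)))"

text \<open>pi_{-i}: the profile with agent i's component erased (set to 0).\<close>
definition minus_pol :: "'n::finite \<Rightarrow> real^'a::finite^'s::finite^'n \<Rightarrow> real^'a^'s^'n" where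
  "minus_pol i \<pi> = (\<chi> j. if j = i then 0 else \<pi>$j)"

definition upd_pol :: "real^'a::finite^'s::finite^'n::finite \<Rightarrow> 'n \<Rightarrow> real^'a^'s \<Rightarrow> real^'a^'s^'n" where
  "upd_pol \<pi> i x = (\<chi> j. if j = i then x else \<pi>$j)"

definition utility :: "('n::finite \<Rightarrow> (real^'a::finite^'s::finite^'n) \<times> (real^'a^'s^'n) \<Rightarrow> real)
    \<Rightarrow> ('n \<Rightarrow> 'a set) \<Rightarrow> ('s \<Rightarrow> ('n \<Rightarrow> 'a) \<Rightarrow> 's \<Rightarrow> real) \<Rightarrow> ('s \<Rightarrow> real) \<Rightarrow> real
    \<Rightarrow> 'n \<Rightarrow> real^'a^'s^'n \<Rightarrow> real" where
  "utility F A P \<mu> \<gamma> i \<pi> = F i (occ_measure A P \<mu> \<gamma> \<pi>, minus_pol i \<pi>)"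

definition is_nash :: "('n::finite \<Rightarrow> (real^'a::finite^'s::finite^'n) \<times> (real^'a^'s^'n) \<Rightarrow> real)
    \<Rightarrow> ('n \<Rightarrow> 'a set) \<Rightarrow> ('s \<Rightarrow> ('n \<Rightarrow> 'a) \<Rightarrow> 's \<Rightarrow> real) \<Rightarrow> ('s \<Rightarrow> real) \<Rightarrow> real
    \<Rightarrow> real^'a^'s^'n \<Rightarrow> bool" where
  "is_nash F A P \<mu> \<gamma> \<pi> \<longleftrightarrow>
     (\<forall>i. \<forall>x\<in>policy_set (A i). utility F A P \<mu> \<gamma> i (upd_pol \<pi> i x) \<le> utility F A P \<mu> \<gamma> i \<pi>)"

definition partial_grad :: "('n::finite \<Rightarrow> (real^'a::finite^'s::finite^'n) \<times> (real^'a^'s^'n) \<Rightarrow> real)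
    \<Rightarrow> ('n \<Rightarrow> 'a set) \<Rightarrow> ('s \<Rightarrow> ('n \<Rightarrow> 'a) \<Rightarrow> 's \<Rightarrow> real) \<Rightarrow> ('s \<Rightarrow> real) \<Rightarrow> real
    \<Rightarrow> 'n \<Rightarrow> real^'a^'s^'n \<Rightarrow> real^'a^'s" where
  "partial_grad F A P \<mu> \<gamma> i \<pi> =
     (THE g. GDERIV (\<lambda>x. utility F A P \<mu> \<gamma> i (upd_pol \<pi> i x)) (\<pi>$i) :> g)"

definition grad_field :: "('n::finite \<Rightarrow> (real^'a::finite^'s::finite^'n) \<times> (real^'a^'s^'n) \<Rightarrow> real)
    \<Rightarrow> ('n \<Rightarrow> 'a set) \<Rightarrow> ('s \<Rightarrow> ('n \<Rightarrow> 'a) \<Rightarrow> 's \<Rightarrow> real) \<Rightarrow> ('s \<Rightarrow> real) \<Rightarrow> real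
    \<Rightarrow> real^'a^'s^'n \<Rightarrow> real^'a^'s^'n" where
  "grad_field F A P \<mu> \<gamma> \<pi> = (\<chi> i. partial_grad F A P \<mu> \<gamma> i \<pi>)"

end

(*
  Fix a profile pi, an agent i and a deviation w.  Let agent i play, in each
  state s, the average of pi_i(.|s) and w(.|s) weighted by (1 - t) d^pi(s) and t d^(w,pi_-i)(s).
  The state occupancy of this mixed policy p_t is the same combination of the two state
  occupancies (both sides solve the same Bellman equation), so its occupancy measure is
  (1 - t) lambda(pi) + t lambda(w,pi_-i).  Concavity of F_i in lambda gives
  u_i(p_t) - u_i(pi) >= t (u_i(w,pi_-i) - u_i(pi)), and by (A2) p_t is a policy at distance O(t)
  from pi_i.  Hence the variational inequality <grad_i u_i(pi), v - pi_i> <= 0 for all policies v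
  makes every deviation unprofitable; conversely a best response satisfies it.  On a closed
  convex set this inequality is the fixed-point property of the projected gradient step, and it
  splits agent by agent because Pi is a product.

  The gradient exists in all coordinates pi_i(a|s), not only along the simplex: near a profile
  d^pi solves a nonsingular linear system, so by Cramer's rule lambda is a rational function of pi.
*)

theory Submission
  imports Defs
begin

section \<open>Gradients, first-order conditions and projections\<close>

lemma differentiable_gderiv_The:
  fixes f :: "'v::euclidean_space \<Rightarrow> real"
  assumes "f differentiable (at x)"
  shows "GDERIV f x :> (THE G. GDERIV f x :> G)"
proof (rule theI')
  obtain f' where f': "(f has_derivative f') (at x)"
    using assms unfolding differentiable_def by blast
  have "f' = (\<lambda>h. h \<bullet> (\<Sum>b\<in>Basis. f' b *\<^sub>R b))"
  proof
    fix h
    have "f' h = f' (\<Sum>b\<in>Basis. (h \<bullet> b) *\<^sub>R b)" by (simp add: euclidean_representation)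
    also have "\<dots> = (\<Sum>b\<in>Basis. (h \<bullet> b) * f' b)"
      using has_derivative_linear[OF f'] by (simp add: linear_sum linear_scale)
    finally show "f' h = h \<bullet> (\<Sum>b\<in>Basis. f' b *\<^sub>R b)"
      by (simp add: inner_sum_right mult.commute)
  qed
  then have "GDERIV f x :> (\<Sum>b\<in>Basis. f' b *\<^sub>R b)"
    unfolding gderiv_def using f' by simp
  moreover have "G = G'" if "GDERIV f x :> G" "GDERIV f x :> G'" for G G'
    using has_derivative_unique[OF that[unfolded gderiv_def]] by (simp add: vector_eq_ldot fun_eq_iff)
  ultimately show "\<exists>!G. GDERIV f x :> G" by blast
qed

lemma gderiv_inner_le_0_at_max_on_convex:
  fixes u :: "'v::real_inner \<Rightarrow> real"
  assumes S: "convex S" "x \<in> S" "w \<in> S"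
    and grad: "GDERIV u x :> G" and max: "\<forall>v\<in>S. u v \<le> u x"
  shows "G \<bullet> (w - x) \<le> 0"
proof (rule ccontr)
  assume "\<not> G \<bullet> (w - x) \<le> 0"
  then have slope: "0 < G \<bullet> (w - x)" by simp
  have line: "((\<lambda>t::real. x + t *\<^sub>R (w - x)) has_derivative (\<lambda>t. t *\<^sub>R (w - x))) (at 0)"
    by (auto intro!: derivative_eq_intros)
  have "((\<lambda>t. u (x + t *\<^sub>R (w - x))) has_derivative (\<lambda>t. t * (G \<bullet> (w - x)))) (at 0)"
  proof -
    have "(u has_derivative (\<lambda>h. h \<bullet> G)) (at ((\<lambda>t::real. x + t *\<^sub>R (w - x)) 0))"
      using grad by (simp add: gderiv_def)
    from diff_chain_at[OF line this] show ?thesis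
      by (simp add: o_def inner_commute)
  qed
  then have "DERIV (\<lambda>t. u (x + t *\<^sub>R (w - x))) 0 :> G \<bullet> (w - x)"
    by (rule has_derivative_imp_has_field_derivative) simp
  from DERIV_pos_inc_right[OF this slope] obtain d where d: "d > 0"
    and incr: "\<And>h. 0 < h \<Longrightarrow> h < d \<Longrightarrow> u x < u (x + h *\<^sub>R (w - x))"
    by auto
  define h where "h = min (d / 2) 1"
  have h: "0 < h" "h < d" "h \<le> 1" using d by (auto simp: h_def)
  have "x + h *\<^sub>R (w - x) = (1 - h) *\<^sub>R x + h *\<^sub>R w" by (simp add: algebra_simps)
  also have "\<dots> \<in> S" using convexD_alt[OF S h(1)[THEN less_imp_le] h(3)] .
  finally show False using max incr[OF h(1,2)] by fastforce
qed

lemma min_le_convex_combination: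
  fixes x y t :: real
  assumes "0 \<le> t" "t \<le> 1"
  shows "min x y \<le> (1 - t) * x + t * y"
proof -
  have "(1 - t) * min x y + t * min x y \<le> (1 - t) * x + t * y"
    using assms by (intro add_mono mult_left_mono) auto
  then show ?thesis by (simp add: algebra_simps)
qed

lemma gain_along_descent_path_le_0:
  fixes u :: "'v::real_inner \<Rightarrow> real"
  assumes grad: "GDERIV u x :> G"
    and dist: "\<And>t. 0 < t \<Longrightarrow> t \<le> 1 \<Longrightarrow> norm (p t - x) \<le> t * C"
    and descent: "\<And>t. 0 < t \<Longrightarrow> t \<le> 1 \<Longrightarrow> (p t - x) \<bullet> G \<le> 0"
    and gain: "\<And>t. 0 < t \<Longrightarrow> t \<le> 1 \<Longrightarrow> t * \<Delta> \<le> u (p t) - u x"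
  shows "\<Delta> \<le> 0"
proof (rule ccontr)
  assume "\<not> \<Delta> \<le> 0"
  then have \<Delta>: "0 < \<Delta>" by simp
  have C: "0 \<le> C" using dist[of 1] norm_ge_zero[of "p 1 - x"] by linarith
  define e where "e = \<Delta> / (2 * (C + 1))"
  have e: "0 < e" using \<Delta> C by (simp add: e_def)
  obtain \<delta> where \<delta>: "\<delta> > 0"
    and lin: "\<And>y. norm (y - x) < \<delta> \<Longrightarrow> norm (u y - u x - (y - x) \<bullet> G) \<le> e * norm (y - x)"
    using grad e unfolding gderiv_def has_derivative_at_alt by blast
  define t where "t = min 1 (\<delta> / (2 * (C + 1)))"
  have t: "0 < t" "t \<le> 1" using \<delta> C by (auto simp: t_def)
  have "t * C \<le> \<delta> / (2 * (C + 1)) * C"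
    using C by (intro mult_right_mono) (auto simp: t_def)
  also have "\<dots> < \<delta>"
    using \<delta> C by (simp add: field_simps) (smt (verit) mult_nonneg_nonneg)
  finally have "norm (p t - x) < \<delta>" using dist[OF t] by linarith
  have "t * \<Delta> \<le> u (p t) - u x" by (rule gain[OF t])
  also have "\<dots> \<le> (p t - x) \<bullet> G + e * norm (p t - x)"
    using lin[OF \<open>norm (p t - x) < \<delta>\<close>] by (simp add: abs_le_iff)
  also have "\<dots> \<le> e * (t * C)"
    using descent[OF t] mult_left_mono[OF dist[OF t], of e] e by linarith
  also have "\<dots> = t * \<Delta> * (C / (2 * (C + 1)))" using C by (simp add: e_def field_simps)
  also have "\<dots> < t * \<Delta>"
    using t \<Delta> C by (simp add: field_simps) (smt (verit) mult_nonneg_nonneg mult_pos_pos)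
  finally show False by simp
qed

lemma closest_point_fixed_iff:
  fixes S :: "'v::euclidean_space set"
  assumes S: "convex S" "closed S" "y \<in> S"
  shows "(\<forall>\<eta>>0. y = closest_point S (y + \<eta> *\<^sub>R g)) \<longleftrightarrow> (\<forall>w\<in>S. g \<bullet> (w - y) \<le> 0)"
proof
  assume "\<forall>\<eta>>0. y = closest_point S (y + \<eta> *\<^sub>R g)"
  then have "y = closest_point S (y + g)" by (metis scaleR_one zero_less_one)
  then show "\<forall>w\<in>S. g \<bullet> (w - y) \<le> 0"
    using closest_point_dot[OF S(1,2), of _ "y + g"] by simp
next
  assume vi: "\<forall>w\<in>S. g \<bullet> (w - y) \<le> 0"
  show "\<forall>\<eta>>0. y = closest_point S (y + \<eta> *\<^sub>R g)"
  proof (intro allI impI)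
    fix \<eta> :: real
    assume "0 < \<eta>"
    have norm_le_add: "norm d \<le> norm (d + e)" if "0 \<le> d \<bullet> e" for d e :: 'v
      using that inner_ge_zero[of e]
      by (simp add: norm_le inner_add_left inner_add_right inner_commute)
    have "dist (y + \<eta> *\<^sub>R g) y \<le> dist (y + \<eta> *\<^sub>R g) z" if "z \<in> S" for z
    proof -
      have "0 \<le> (\<eta> *\<^sub>R g) \<bullet> (y - z)"
        using vi that \<open>0 < \<eta>\<close> by (simp add: inner_diff_right mult_nonneg_nonpos)
      from norm_le_add[OF this] show ?thesis by (simp add: dist_norm algebra_simps)
    qed
    then show "y = closest_point S (y + \<eta> *\<^sub>R g)"
      by (intro closest_point_unique[OF S]) auto
  qed
qed

lemma inner_nonpos_on_vector_box_iff:
  fixes g y :: "'v::real_inner ^ 'n::finite"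
  assumes "\<forall>i. y $ i \<in> S i"
  shows "(\<forall>w\<in>{w. \<forall>i. w $ i \<in> S i}. g \<bullet> (w - y) \<le> 0) \<longleftrightarrow> (\<forall>i. \<forall>v\<in>S i. g $ i \<bullet> (v - y $ i) \<le> 0)"
proof
  assume box: "\<forall>w\<in>{w. \<forall>i. w $ i \<in> S i}. g \<bullet> (w - y) \<le> 0"
  show "\<forall>i. \<forall>v\<in>S i. g $ i \<bullet> (v - y $ i) \<le> 0"
  proof (intro allI ballI)
    fix i v
    assume "v \<in> S i"
    define w where "w = (\<chi> j. if j = i then v else y $ j)"
    have "w \<in> {w. \<forall>i. w $ i \<in> S i}" using assms \<open>v \<in> S i\<close> by (simp add: w_def)
    with box have "g \<bullet> (w - y) \<le> 0" by blast
    moreover have "g \<bullet> (w - y) = g $ i \<bullet> (v - y $ i)"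
      by (simp add: inner_vec_def w_def if_distrib[of "\<lambda>z. g $ _ \<bullet> (z - y $ _)"] cong: if_cong)
    ultimately show "g $ i \<bullet> (v - y $ i) \<le> 0" by simp
  qed
qed (auto simp: inner_vec_def intro!: sum_nonpos)

lemma differentiable_vec_lambda:
  fixes f :: "'x::real_normed_vector \<Rightarrow> 'i::finite \<Rightarrow> 'b::euclidean_space"
  assumes "\<And>i. (\<lambda>x. f x i) differentiable (at x0)"
  shows "(\<lambda>x. \<chi> i. f x i) differentiable (at x0)"
proof (subst differentiable_componentwise_within, intro ballI)
  fix b :: "'b ^ 'i"
  assume "b \<in> Basis"
  then obtain i u where b: "b = axis i u" "u \<in> Basis" unfolding Basis_vec_def by auto
  have "(\<lambda>x. f x i \<bullet> u) differentiable (at x0)"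
    using assms[of i] b(2) by (subst (asm) differentiable_componentwise_within) auto
  then show "(\<lambda>x. (\<chi> i. f x i) \<bullet> b) differentiable (at x0)"
    using b by (simp add: inner_axis)
qed

lemma real_polynomial_function_det:
  fixes M :: "'x::real_normed_vector \<Rightarrow> real ^ 'n::finite ^ 'n"
  assumes "\<And>i j. real_polynomial_function (\<lambda>x. M x $ i $ j)"
  shows "real_polynomial_function (\<lambda>x. det (M x))"
  unfolding det_def
  by (intro real_polynomial_function_sum real_polynomial_function_prod
      real_polynomial_function.intros(2,4) assms finite_permutations) simp_all

section \<open>Policies, profiles and product distributions\<close>

lemma policy_set_iff:
  "p \<in> policy_set B \<longleftrightarrow>
     (\<forall>s c. 0 \<le> p $ s $ c) \<and> (\<forall>s c. c \<notin> B \<longrightarrow> p $ s $ c = 0) \<and> (\<forall>s. (\<Sum>c\<in>B. p $ s $ c) = 1)"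
  by (auto simp: policy_set_def)

lemma profile_set_iff: "\<rho> \<in> profile_set A \<longleftrightarrow> (\<forall>k. \<rho> $ k \<in> policy_set (A k))"
  by (simp add: profile_set_def)

lemma convex_policy_set: "convex (policy_set B)"
  unfolding convex_def policy_set_def
  by (auto simp: sum.distrib simp flip: sum_distrib_left intro!: add_nonneg_nonneg mult_nonneg_nonneg)

lemma closed_policy_set: "closed (policy_set B :: (real ^ 'a::finite ^ 's::finite) set)"
proof -
  have eq: "policy_set B = (\<Inter>s. (\<Inter>c. {p :: real ^ 'a ^ 's. 0 \<le> p $ s $ c})
      \<inter> (\<Inter>c\<in>-B. {p. p $ s $ c = 0}) \<inter> {p. (\<Sum>c\<in>B. p $ s $ c) = 1})"
    by (auto simp: policy_set_def)
  have "continuous_on UNIV (\<lambda>p :: real ^ 'a ^ 's. p $ s $ c)" for s c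
    by (intro linear_continuous_on bounded_linear_compose[OF bounded_linear_vec_nth bounded_linear_vec_nth])
  then show ?thesis unfolding eq
    by (intro closed_INT closed_Int ballI allI closed_Collect_le closed_Collect_eq
        continuous_on_const continuous_on_sum)
qed

lemma convex_profile_set: "convex (profile_set A)"
  unfolding profile_set_def by (rule convex_box_cart) (simp add: convex_policy_set)

lemma closed_profile_set: "closed (profile_set A :: (real ^ 'a::finite ^ 's::finite ^ 'n::finite) set)"
  unfolding profile_set_def by (intro closed_vector_box allI closed_policy_set)

lemma upd_pol_nth: "upd_pol \<pi> i x $ k = (if k = i then x else \<pi> $ k)"
  by (simp add: upd_pol_def)

lemma upd_pol_nth_self [simp]: "upd_pol \<pi> i (\<pi> $ i) = \<pi>"
  by (simp add: upd_pol_def vec_eq_iff)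

lemma minus_pol_upd_pol [simp]: "minus_pol i (upd_pol \<pi> i x) = minus_pol i \<pi>"
  by (simp add: minus_pol_def upd_pol_def vec_eq_iff)

lemma upd_pol_in_profile_set:
  "\<pi> \<in> profile_set A \<Longrightarrow> x \<in> policy_set (A i) \<Longrightarrow> upd_pol \<pi> i x \<in> profile_set A"
  by (simp add: profile_set_iff upd_pol_nth)

lemma joint_prob_upd_pol:
  "joint_prob (upd_pol \<pi> i x) s a = x $ s $ a i * (\<Prod>k\<in>-{i}. \<pi> $ k $ s $ a k)"
proof -
  have "joint_prob (upd_pol \<pi> i x) s a
      = upd_pol \<pi> i x $ i $ s $ a i * (\<Prod>k\<in>-{i}. upd_pol \<pi> i x $ k $ s $ a k)"
    unfolding joint_prob_def by (subst prod.remove[of _ i]) (auto simp: Compl_eq_Diff_UNIV)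
  then show ?thesis by (simp add: upd_pol_nth)
qed

lemma sum_joint_actions_prod:
  fixes f :: "'n::finite \<Rightarrow> 'a \<Rightarrow> real"
  assumes "\<And>k. finite (A k)"
  shows "(\<Sum>a\<in>joint_actions A. \<Prod>k\<in>UNIV. f k (a k)) = (\<Prod>k\<in>UNIV. \<Sum>c\<in>A k. f k c)"
proof -
  have "joint_actions A = Pi\<^sub>E UNIV A"
    by (simp add: joint_actions_def PiE_UNIV_domain Pi_def)
  then show ?thesis using assms by (simp add: prod_sum_PiE)
qed

definition joint_abs_mass :: "('n::finite \<Rightarrow> 'a::finite set) \<Rightarrow> real ^ 'a ^ 's ^ 'n \<Rightarrow> 's \<Rightarrow> real" where
  "joint_abs_mass A \<rho> s = (\<Prod>k\<in>UNIV. \<Sum>c\<in>A k. \<bar>\<rho> $ k $ s $ c\<bar>)"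

lemma sum_abs_joint_prob: "(\<Sum>a\<in>joint_actions A. \<bar>joint_prob \<rho> s a\<bar>) = joint_abs_mass A \<rho> s"
  unfolding joint_prob_def joint_abs_mass_def abs_prod by (rule sum_joint_actions_prod) simp

lemma joint_abs_mass_nonneg: "0 \<le> joint_abs_mass A \<rho> s"
  unfolding joint_abs_mass_def by (intro prod_nonneg sum_nonneg) auto

lemma continuous_joint_abs_mass: "continuous_on UNIV (\<lambda>\<rho>. joint_abs_mass A \<rho> s)"
  unfolding joint_abs_mass_def by (intro continuous_intros)

lemma sum_joint_prob_profile:
  assumes "\<rho> \<in> profile_set A"
  shows "(\<Sum>a\<in>joint_actions A. joint_prob \<rho> s a) = 1"
  using assms unfolding joint_prob_def
  by (subst sum_joint_actions_prod) (auto simp: profile_set_iff policy_set_iff)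

lemma joint_abs_mass_profile:
  assumes "\<rho> \<in> profile_set A"
  shows "joint_abs_mass A \<rho> s = 1"
  using assms unfolding joint_abs_mass_def by (auto simp: profile_set_iff policy_set_iff)

lemma marginal_joint_prob_profile:
  assumes "\<rho> \<in> profile_set A"
  shows "(\<Sum>a\<in>{a\<in>joint_actions A. a j = b}. joint_prob \<rho> s a) = \<rho> $ j $ s $ b"
proof (cases "b \<in> A j")
  case True
  then have "{a\<in>joint_actions A. a j = b} = joint_actions (A(j := {b}))"
    by (auto simp: joint_actions_def)
  then have "(\<Sum>a\<in>{a\<in>joint_actions A. a j = b}. joint_prob \<rho> s a)
      = (\<Prod>k\<in>UNIV. \<Sum>c\<in>(A(j := {b})) k. \<rho> $ k $ s $ c)"
    unfolding joint_prob_def by (simp only:) (rule sum_joint_actions_prod, simp)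
  also have "\<dots> = (\<Prod>k\<in>UNIV. if k = j then \<rho> $ j $ s $ b else 1)"
    using assms by (intro prod.cong) (auto simp: profile_set_iff policy_set_iff)
  finally show ?thesis by simp
next
  case False
  then have "{a\<in>joint_actions A. a j = b} = {}" by (auto simp: joint_actions_def)
  moreover have "\<rho> $ j $ s $ b = 0" using False assms by (simp add: profile_set_iff policy_set_iff)
  ultimately show ?thesis by (simp only:) simp
qed

lemma real_polynomial_function_joint_prob: "real_polynomial_function (\<lambda>\<rho>. joint_prob \<rho> s a)"
  unfolding joint_prob_def
  by (intro real_polynomial_function_prod real_polynomial_function.intros(1)
      bounded_linear_compose[OF bounded_linear_vec_nth] bounded_linear_vec_nth) simp

section \<open>Discounted occupancy measures\<close>

locale markov_game =
  fixes A :: "'n::finite \<Rightarrow> 'a::finite set"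
    and P :: "'s::finite \<Rightarrow> ('n \<Rightarrow> 'a) \<Rightarrow> 's \<Rightarrow> real"
    and \<mu> :: "'s \<Rightarrow> real" and \<gamma> :: real
  assumes gamma: "0 < \<gamma>" "\<gamma> < 1"
    and mu: "\<forall>s. 0 \<le> \<mu> s" "(\<Sum>s\<in>UNIV. \<mu> s) = 1"
    and P: "\<forall>s. \<forall>a\<in>joint_actions A. (\<forall>s'. 0 \<le> P s a s') \<and> (\<Sum>s'\<in>UNIV. P s a s') = 1"
begin

abbreviation "state_occ \<equiv> disc_state_occ A P \<mu> \<gamma>"
abbreviation "occ \<equiv> occ_measure A P \<mu> \<gamma>"

definition policy_kernel :: "real ^ 'a ^ 's ^ 'n \<Rightarrow> 's \<Rightarrow> 's \<Rightarrow> real" where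
  "policy_kernel \<rho> s s' = (\<Sum>a\<in>joint_actions A. joint_prob \<rho> s a * P s a s')"

definition transition :: "real ^ 'a ^ 's ^ 'n \<Rightarrow> ('s \<Rightarrow> real) \<Rightarrow> 's \<Rightarrow> real" where
  "transition \<rho> v s' = (\<Sum>s\<in>UNIV. v s * policy_kernel \<rho> s s')"

lemma state_dist_Suc_transition:
  "state_dist A P \<mu> \<rho> (Suc t) = transition \<rho> (state_dist A P \<mu> \<rho> t)"
  by (simp add: fun_eq_iff transition_def policy_kernel_def sum_distrib_left mult.assoc)

lemma transition_diff: "transition \<rho> (\<lambda>s. v s - w s) s' = transition \<rho> v s' - transition \<rho> w s'"
  by (simp add: transition_def left_diff_distrib sum_subtractf)

lemma transition_scale: "transition \<rho> (\<lambda>s. c * v s) s' = c * transition \<rho> v s'"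
  by (simp add: transition_def sum_distrib_left mult.assoc)

lemma sum_abs_policy_kernel_le: "(\<Sum>s'\<in>UNIV. \<bar>policy_kernel \<rho> s s'\<bar>) \<le> joint_abs_mass A \<rho> s"
proof -
  have "(\<Sum>s'\<in>UNIV. \<bar>policy_kernel \<rho> s s'\<bar>)
      \<le> (\<Sum>s'\<in>UNIV. \<Sum>a\<in>joint_actions A. \<bar>joint_prob \<rho> s a\<bar> * P s a s')"
    unfolding policy_kernel_def
    by (intro sum_mono order_trans[OF sum_abs] eq_refl sum.cong) (use P in \<open>auto simp: abs_mult\<close>)
  also have "\<dots> = (\<Sum>a\<in>joint_actions A. \<bar>joint_prob \<rho> s a\<bar> * (\<Sum>s'\<in>UNIV. P s a s'))"
    by (subst sum.swap) (simp add: sum_distrib_left)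
  also have "\<dots> = joint_abs_mass A \<rho> s"
    using P by (simp add: sum_abs_joint_prob)
  finally show ?thesis .
qed

lemma sum_policy_kernel_profile:
  assumes "\<rho> \<in> profile_set A"
  shows "(\<Sum>s'\<in>UNIV. policy_kernel \<rho> s s') = 1"
proof -
  have "(\<Sum>s'\<in>UNIV. policy_kernel \<rho> s s') = (\<Sum>a\<in>joint_actions A. joint_prob \<rho> s a * (\<Sum>s'\<in>UNIV. P s a s'))"
    unfolding policy_kernel_def by (subst sum.swap) (simp add: sum_distrib_left)
  then show ?thesis using P sum_joint_prob_profile[OF assms] by simp
qed

lemma sum_abs_transition_le:
  assumes "\<And>s. joint_abs_mass A \<rho> s \<le> q"
  shows "(\<Sum>s'\<in>UNIV. \<bar>transition \<rho> v s'\<bar>) \<le> q * (\<Sum>s\<in>UNIV. \<bar>v s\<bar>)"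
proof -
  have "(\<Sum>s'\<in>UNIV. \<bar>transition \<rho> v s'\<bar>) \<le> (\<Sum>s'\<in>UNIV. \<Sum>s\<in>UNIV. \<bar>v s\<bar> * \<bar>policy_kernel \<rho> s s'\<bar>)"
    unfolding transition_def by (intro sum_mono order_trans[OF sum_abs]) (simp add: abs_mult)
  also have "\<dots> = (\<Sum>s\<in>UNIV. \<bar>v s\<bar> * (\<Sum>s'\<in>UNIV. \<bar>policy_kernel \<rho> s s'\<bar>))"
    by (subst sum.swap) (simp add: sum_distrib_left)
  also have "\<dots> \<le> (\<Sum>s\<in>UNIV. \<bar>v s\<bar> * q)"
    by (intro sum_mono mult_left_mono order_trans[OF sum_abs_policy_kernel_le assms]) simp
  finally show ?thesis by (simp add: sum_distrib_left mult.commute)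
qed

text \<open>Off the simplex the induced chain is signed, but near a profile the discounted series
  still converges; this is what makes \<open>occ\<close> differentiable in all coordinates.\<close>

definition contractive :: "real ^ 'a ^ 's ^ 'n \<Rightarrow> bool" where
  "contractive \<rho> \<longleftrightarrow> (\<forall>s. \<gamma> * joint_abs_mass A \<rho> s < 1)"

lemma contractive_profile: "\<rho> \<in> profile_set A \<Longrightarrow> contractive \<rho>"
  using gamma by (simp add: contractive_def joint_abs_mass_profile)

lemma open_contractive: "open {\<rho>. contractive \<rho>}"
proof -
  have "{\<rho>. contractive \<rho>} = (\<Inter>s. {\<rho>. \<gamma> * joint_abs_mass A \<rho> s < 1})"
    by (auto simp: contractive_def)
  then show ?thesis
    by (auto intro!: open_Collect_less continuous_intros continuous_joint_abs_mass)
qed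

lemma contractive_bound:
  assumes "contractive \<rho>"
  obtains q where "0 \<le> q" "\<gamma> * q < 1" "\<And>s. joint_abs_mass A \<rho> s \<le> q"
proof
  let ?q = "Max (range (joint_abs_mass A \<rho>))"
  show "joint_abs_mass A \<rho> s \<le> ?q" for s by (rule Max_ge) auto
  then show "0 \<le> ?q" using joint_abs_mass_nonneg order_trans by blast
  have "?q \<in> range (joint_abs_mass A \<rho>)" by (rule Max_in) auto
  then obtain s where "?q = joint_abs_mass A \<rho> s" by blast
  then show "\<gamma> * ?q < 1" using assms by (simp add: contractive_def)
qed

lemma summable_state_dist:
  assumes "contractive \<rho>"
  shows "summable (\<lambda>t. \<gamma> ^ t * state_dist A P \<mu> \<rho> t s)"
proof -
  obtain q where q: "0 \<le> q" "\<gamma> * q < 1" "\<And>s. joint_abs_mass A \<rho> s \<le> q"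
    using contractive_bound[OF assms] by blast
  have mass: "(\<Sum>s\<in>UNIV. \<bar>state_dist A P \<mu> \<rho> t s\<bar>) \<le> q ^ t" for t
  proof (induction t)
    case 0
    then show ?case using mu by simp
  next
    case (Suc t)
    then show ?case
      using sum_abs_transition_le[OF q(3), of "state_dist A P \<mu> \<rho> t"] q(1)
      by (simp add: state_dist_Suc_transition) (meson mult_left_mono order_trans)
  qed
  show ?thesis
  proof (rule summable_comparison_test)
    show "summable (\<lambda>t. (\<gamma> * q) ^ t)" using q gamma by (intro summable_geometric) simp
    show "\<exists>N. \<forall>t\<ge>N. norm (\<gamma> ^ t * state_dist A P \<mu> \<rho> t s) \<le> (\<gamma> * q) ^ t"
      using gamma member_le_sum[of s UNIV "\<lambda>s. \<bar>state_dist A P \<mu> \<rho> _ s\<bar>"] mass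
      by (auto simp: abs_mult power_mult_distrib intro!: mult_left_mono order_trans[OF _ mass])
  qed
qed

lemma state_occ_bellman:
  assumes "contractive \<rho>"
  shows "state_occ \<rho> s' = (1 - \<gamma>) * \<mu> s' + \<gamma> * transition \<rho> (state_occ \<rho>) s'"
proof -
  define D where "D s = (\<Sum>t. \<gamma> ^ t * state_dist A P \<mu> \<rho> t s)" for s
  have sums: "summable (\<lambda>t. \<gamma> ^ t * state_dist A P \<mu> \<rho> t s)" for s
    by (rule summable_state_dist[OF assms])
  have "(\<lambda>t. \<gamma> ^ Suc t * state_dist A P \<mu> \<rho> (Suc t) s')
      = (\<lambda>t. \<gamma> * (\<Sum>s\<in>UNIV. (\<gamma> ^ t * state_dist A P \<mu> \<rho> t s) * policy_kernel \<rho> s s'))"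
    by (simp add: fun_eq_iff state_dist_Suc_transition transition_def sum_distrib_left mult_ac)
  then have "(\<Sum>t. \<gamma> ^ Suc t * state_dist A P \<mu> \<rho> (Suc t) s')
      = \<gamma> * (\<Sum>t. \<Sum>s\<in>UNIV. (\<gamma> ^ t * state_dist A P \<mu> \<rho> t s) * policy_kernel \<rho> s s')"
    by (simp add: suminf_mult summable_sum summable_mult2 sums)
  also have "\<dots> = \<gamma> * (\<Sum>s\<in>UNIV. (\<Sum>t. \<gamma> ^ t * state_dist A P \<mu> \<rho> t s) * policy_kernel \<rho> s s')"
    by (simp add: suminf_sum summable_mult2 sums suminf_mult2[OF sums])
  also have "\<dots> = \<gamma> * transition \<rho> D s'"
    by (simp add: transition_def D_def)
  finally have D_bellman: "D s' = \<mu> s' + \<gamma> * transition \<rho> D s'"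
    using suminf_split_head[OF sums[of s']] by (simp add: D_def)
  have occ_eq: "state_occ \<rho> = (\<lambda>s. (1 - \<gamma>) * D s)"
    by (simp add: fun_eq_iff disc_state_occ_def D_def)
  show ?thesis
    unfolding occ_eq transition_scale using D_bellman by (simp add: algebra_simps)
qed

lemma transition_fixed_point_zero:
  assumes "contractive \<rho>" "\<And>s. v s = \<gamma> * transition \<rho> v s"
  shows "v s = 0"
proof -
  obtain q where q: "0 \<le> q" "\<gamma> * q < 1" "\<And>s. joint_abs_mass A \<rho> s \<le> q"
    using contractive_bound[OF assms(1)] by blast
  let ?S = "\<Sum>s\<in>UNIV. \<bar>v s\<bar>"
  have "?S = \<gamma> * (\<Sum>s\<in>UNIV. \<bar>transition \<rho> v s\<bar>)"
    using gamma by (subst assms(2)) (simp add: abs_mult sum_distrib_left)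
  also have "\<dots> \<le> \<gamma> * q * ?S"
    using gamma sum_abs_transition_le[OF q(3)] by (simp add: mult.assoc)
  finally have "(1 - \<gamma> * q) * ?S \<le> 0" by (simp add: algebra_simps)
  then have "?S = 0" using q(2) by (simp add: mult_le_0_iff sum_nonneg order.antisym)
  then show ?thesis by (simp add: sum_nonneg_eq_0_iff)
qed

lemma state_occ_unique:
  assumes "contractive \<rho>" "\<And>s. v s = (1 - \<gamma>) * \<mu> s + \<gamma> * transition \<rho> v s"
  shows "v s = state_occ \<rho> s"
proof -
  have "(\<lambda>s. v s - state_occ \<rho> s) s = 0"
  proof (rule transition_fixed_point_zero[OF assms(1)])
    show "v s - state_occ \<rho> s = \<gamma> * transition \<rho> (\<lambda>s. v s - state_occ \<rho> s) s" for s
      using assms(2)[of s] state_occ_bellman[OF assms(1), of s]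
      by (simp add: transition_diff algebra_simps)
  qed
  then show ?thesis by simp
qed

lemma occ_measure_eq:
  assumes "contractive \<rho>"
  shows "occ \<rho> $ j $ s $ b = state_occ \<rho> s * (\<Sum>a\<in>{a\<in>joint_actions A. a j = b}. joint_prob \<rho> s a)"
    (is "_ = _ * ?m")
proof -
  have "occ \<rho> $ j $ s $ b = (1 - \<gamma>) * (\<Sum>t. (\<gamma> ^ t * state_dist A P \<mu> \<rho> t s) * ?m)"
    by (simp add: occ_measure_def sum_distrib_left mult.assoc)
  then show ?thesis
    by (simp add: suminf_mult2[OF summable_state_dist[OF assms]] disc_state_occ_def)
qed

lemma occ_measure_profile:
  assumes "\<rho> \<in> profile_set A"
  shows "occ \<rho> $ j $ s $ b = state_occ \<rho> s * \<rho> $ j $ s $ b"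
  using occ_measure_eq[OF contractive_profile[OF assms]] marginal_joint_prob_profile[OF assms]
  by simp

lemma sum_state_occ_profile:
  assumes "\<rho> \<in> profile_set A"
  shows "(\<Sum>s\<in>UNIV. state_occ \<rho> s) = 1"
proof -
  have "(\<Sum>s\<in>UNIV. transition \<rho> (state_occ \<rho>) s) = (\<Sum>s\<in>UNIV. state_occ \<rho> s)"
    unfolding transition_def
    by (subst sum.swap) (simp add: sum_policy_kernel_profile[OF assms] flip: sum_distrib_left)
  then have "(\<Sum>s\<in>UNIV. state_occ \<rho> s) = (1 - \<gamma>) + \<gamma> * (\<Sum>s\<in>UNIV. state_occ \<rho> s)"
    using state_occ_bellman[OF contractive_profile[OF assms]] mu(2)
    by (simp add: sum.distrib sum_distrib_left flip: sum_distrib_left)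
  then have "(1 - \<gamma>) * ((\<Sum>s\<in>UNIV. state_occ \<rho> s) - 1) = 0" by (simp add: algebra_simps)
  then show ?thesis using gamma by simp
qed

lemma occ_measure_in_occ_set:
  assumes "\<rho> \<in> profile_set A" "\<And>s. 0 \<le> state_occ \<rho> s"
  shows "occ \<rho> \<in> occ_set A"
  using assms sum_state_occ_profile[OF assms(1)]
  by (auto simp: occ_set_def occ_measure_profile profile_set_iff policy_set_iff
      simp flip: sum_distrib_left)

definition bellman_matrix :: "real ^ 'a ^ 's ^ 'n \<Rightarrow> real ^ 's ^ 's" where
  "bellman_matrix \<rho> = (\<chi> s' s. (if s' = s then 1 else 0) - \<gamma> * policy_kernel \<rho> s s')"

lemma bellman_matrix_mult:
  "(bellman_matrix \<rho> *v w) $ s' = w $ s' - \<gamma> * transition \<rho> (\<lambda>s. w $ s) s'"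
proof -
  have "(bellman_matrix \<rho> *v w) $ s'
      = (\<Sum>s\<in>UNIV. (if s' = s then 1 else 0) * w $ s) - (\<Sum>s\<in>UNIV. \<gamma> * policy_kernel \<rho> s s' * w $ s)"
    by (simp add: bellman_matrix_def matrix_vector_mult_def left_diff_distrib sum_subtractf)
  then show ?thesis
    by (simp add: transition_def sum_distrib_left mult_ac if_distrib[of "(*) _"] cong: if_cong)
qed

lemma det_bellman_matrix_nonzero:
  assumes "contractive \<rho>"
  shows "det (bellman_matrix \<rho>) \<noteq> 0"
proof -
  have "\<forall>w. bellman_matrix \<rho> *v w = 0 \<longrightarrow> w = 0"
  proof (intro allI impI)
    fix w
    assume "bellman_matrix \<rho> *v w = 0"
    then have "(bellman_matrix \<rho> *v w) $ s = 0" for s by simp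
    then have "w $ s = \<gamma> * transition \<rho> (\<lambda>s. w $ s) s" for s
      using bellman_matrix_mult by (metis eq_iff_diff_eq_0)
    then have "(\<lambda>s. w $ s) s = 0" for s by (rule transition_fixed_point_zero[OF assms])
    then show "w = 0" by (simp add: vec_eq_iff)
  qed
  then obtain B where "B ** bellman_matrix \<rho> = mat 1"
    using matrix_left_invertible_ker by blast
  then have "invertible (bellman_matrix \<rho>)"
    unfolding invertible_def using matrix_left_right_inverse by blast
  then show ?thesis by (simp add: invertible_det_nz)
qed

lemma state_occ_cramer:
  assumes "contractive \<rho>"
  shows "state_occ \<rho> s = det (\<chi> i j. if j = s then (1 - \<gamma>) * \<mu> i else bellman_matrix \<rho> $ i $ j)
                           / det (bellman_matrix \<rho>)"
proof -
  have "(bellman_matrix \<rho> *v (\<chi> s. state_occ \<rho> s)) $ s' = (1 - \<gamma>) * \<mu> s'" for s'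
    using state_occ_bellman[OF assms, of s'] by (simp add: bellman_matrix_mult vec_lambda_inverse)
  then have "bellman_matrix \<rho> *v (\<chi> s. state_occ \<rho> s) = (\<chi> s. (1 - \<gamma>) * \<mu> s)"
    by (simp add: vec_eq_iff)
  from cramer_lemma[of s "bellman_matrix \<rho>" "\<chi> s. state_occ \<rho> s", unfolded this vec_lambda_beta]
  show ?thesis using det_bellman_matrix_nonzero[OF assms] by (simp add: field_simps)
qed

lemma real_polynomial_function_bellman_matrix:
  "real_polynomial_function (\<lambda>\<rho>. bellman_matrix \<rho> $ i $ j)"
  unfolding bellman_matrix_def policy_kernel_def vec_lambda_beta
  by (intro real_polynomial_function_diff real_polynomial_function.intros(2,4)
      real_polynomial_function_sum real_polynomial_function_joint_prob finite)

lemma occ_measure_differentiable: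
  assumes "contractive \<rho>"
  shows "occ differentiable (at \<rho>)"
proof -
  define f where "f \<rho>' = (\<chi> j s b.
      det (\<chi> i j. if j = s then (1 - \<gamma>) * \<mu> i else bellman_matrix \<rho>' $ i $ j) / det (bellman_matrix \<rho>')
      * (\<Sum>a\<in>{a\<in>joint_actions A. a j = b}. joint_prob \<rho>' s a))" for \<rho>'
  have cramer_numerator: "real_polynomial_function (\<lambda>\<rho>'.
      (\<chi> i j. if j = s then (1 - \<gamma>) * \<mu> i else bellman_matrix \<rho>' $ i $ j) $ i $ j)" for s i j
    by (cases "j = s") (simp_all add: real_polynomial_function_bellman_matrix real_polynomial_function.intros(2))
  have "f differentiable (at \<rho>)"
    unfolding f_def using det_bellman_matrix_nonzero[OF assms]
    by (intro differentiable_vec_lambda differentiable_mult differentiable_divide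
        differentiable_at_real_polynomial_function real_polynomial_function_det
        real_polynomial_function_sum real_polynomial_function_joint_prob
        real_polynomial_function_bellman_matrix cramer_numerator finite)
  then obtain f' where "(f has_derivative f') (at \<rho>)" unfolding differentiable_def by blast
  moreover have "f \<rho>' = occ \<rho>'" if "\<rho>' \<in> {\<rho>. contractive \<rho>}" for \<rho>'
    using that by (simp add: f_def vec_eq_iff occ_measure_eq state_occ_cramer)
  ultimately have "(occ has_derivative f') (at \<rho>)"
    using has_derivative_transform_within_open[OF _ open_contractive] assms by blast
  then show ?thesis unfolding differentiable_def by blast
qed

lemma utility_has_partial_grad:
  assumes "\<pi> \<in> profile_set A" and "F i differentiable at (occ \<pi>, minus_pol i \<pi>)"
  shows "GDERIV (\<lambda>x. utility F A P \<mu> \<gamma> i (upd_pol \<pi> i x)) (\<pi> $ i) :> partial_grad F A P \<mu> \<gamma> i \<pi>"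
proof -
  have "(\<lambda>x. upd_pol \<pi> i x) differentiable (at (\<pi> $ i))"
    unfolding upd_pol_def
  proof (intro differentiable_vec_lambda)
    show "(\<lambda>x. if j = i then x else \<pi> $ j) differentiable (at (\<pi> $ i))" for j
      by (cases "j = i") simp_all
  qed
  then have "(\<lambda>x. occ (upd_pol \<pi> i x)) differentiable (at (\<pi> $ i))"
    using occ_measure_differentiable[OF contractive_profile[OF assms(1)]]
      differentiable_chain_at[of "\<lambda>x. upd_pol \<pi> i x" "\<pi> $ i" occ]
    by (simp add: o_def)
  then have "(\<lambda>x. F i (occ (upd_pol \<pi> i x), minus_pol i \<pi>)) differentiable (at (\<pi> $ i))"
    using assms(2) differentiable_chain_at[of "\<lambda>x. (occ (upd_pol \<pi> i x), minus_pol i \<pi>)" "\<pi> $ i" "F i"]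
    by (simp add: o_def)
  then show ?thesis
    unfolding partial_grad_def utility_def minus_pol_upd_pol by (rule differentiable_gderiv_The)
qed

section \<open>Hidden convexity\<close>

lemma transition_upd_pol:
  "transition (upd_pol \<pi> i x) v s' = (\<Sum>s\<in>UNIV. \<Sum>a\<in>joint_actions A.
     v s * x $ s $ a i * ((\<Prod>k\<in>-{i}. \<pi> $ k $ s $ a k) * P s a s'))"
  by (simp add: transition_def policy_kernel_def joint_prob_upd_pol sum_distrib_left mult_ac)

text \<open>The weights are proportional to the state occupancies, which makes the state-action
  occupancy of agent \<open>i\<close>, and with it \<open>occ\<close>, affine in \<open>t\<close>.\<close>

definition mixed_policy :: "real ^ 'a ^ 's ^ 'n \<Rightarrow> 'n \<Rightarrow> real ^ 'a ^ 's \<Rightarrow> real \<Rightarrow> real ^ 'a ^ 's" where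
  "mixed_policy \<pi> i w t = (\<chi> s b.
     ((1 - t) * state_occ \<pi> s * \<pi> $ i $ s $ b + t * state_occ (upd_pol \<pi> i w) s * w $ s $ b)
     / ((1 - t) * state_occ \<pi> s + t * state_occ (upd_pol \<pi> i w) s))"

context
  fixes \<pi> i w
  assumes \<pi>: "\<pi> \<in> profile_set A" and w: "w \<in> policy_set (A i)"
    and occ_pos: "\<And>s. 0 < state_occ \<pi> s" "\<And>s. 0 < state_occ (upd_pol \<pi> i w) s"
begin

lemma mixing_weight_pos:
  assumes "0 \<le> t" "t \<le> 1"
  shows "0 < (1 - t) * state_occ \<pi> s + t * state_occ (upd_pol \<pi> i w) s"
  using min_le_convex_combination[OF assms] occ_pos[of s] by (smt (verit))

lemma mixed_policy_weighted:
  assumes "0 \<le> t" "t \<le> 1"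
  shows "((1 - t) * state_occ \<pi> s + t * state_occ (upd_pol \<pi> i w) s) * mixed_policy \<pi> i w t $ s $ b
       = (1 - t) * (state_occ \<pi> s * \<pi> $ i $ s $ b) + t * (state_occ (upd_pol \<pi> i w) s * w $ s $ b)"
  using mixing_weight_pos[OF assms, of s] by (simp add: mixed_policy_def field_simps)

lemma mixed_policy_in_policy_set:
  assumes "0 \<le> t" "t \<le> 1"
  shows "mixed_policy \<pi> i w t \<in> policy_set (A i)"
proof -
  have x: "\<pi> $ i \<in> policy_set (A i)" using \<pi> by (simp add: profile_set_iff)
  have "(\<Sum>b\<in>A i. mixed_policy \<pi> i w t $ s $ b) = 1" for s
  proof -
    let ?d = "(1 - t) * state_occ \<pi> s + t * state_occ (upd_pol \<pi> i w) s"
    have "?d * (\<Sum>b\<in>A i. mixed_policy \<pi> i w t $ s $ b)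
        = (\<Sum>b\<in>A i. (1 - t) * (state_occ \<pi> s * \<pi> $ i $ s $ b)
                      + t * (state_occ (upd_pol \<pi> i w) s * w $ s $ b))"
      by (simp add: sum_distrib_left mixed_policy_weighted[OF assms])
    also have "\<dots> = (1 - t) * state_occ \<pi> s * (\<Sum>b\<in>A i. \<pi> $ i $ s $ b)
                    + t * state_occ (upd_pol \<pi> i w) s * (\<Sum>b\<in>A i. w $ s $ b)"
      by (simp add: sum.distrib sum_distrib_left mult.assoc)
    also have "\<dots> = ?d" using x w by (simp add: policy_set_iff)
    finally show ?thesis using mixing_weight_pos[OF assms, of s] by simp
  qed
  moreover have "0 \<le> mixed_policy \<pi> i w t $ s $ b" for s b
    using x w assms occ_pos[of s] mixing_weight_pos[OF assms, of s]
    by (auto simp: mixed_policy_def policy_set_iff intro!: divide_nonneg_pos add_nonneg_nonneg)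
  moreover have "mixed_policy \<pi> i w t $ s $ b = 0" if "b \<notin> A i" for s b
    using x w that by (simp add: mixed_policy_def policy_set_iff)
  ultimately show ?thesis by (simp add: policy_set_iff)
qed

lemma state_occ_mixed:
  assumes "0 \<le> t" "t \<le> 1"
  shows "state_occ (upd_pol \<pi> i (mixed_policy \<pi> i w t)) s
       = (1 - t) * state_occ \<pi> s + t * state_occ (upd_pol \<pi> i w) s"
proof -
  let ?d = "\<lambda>s. (1 - t) * state_occ \<pi> s + t * state_occ (upd_pol \<pi> i w) s"
  let ?\<rho> = "upd_pol \<pi> i (mixed_policy \<pi> i w t)"
  have \<rho>: "?\<rho> \<in> profile_set A"
    by (rule upd_pol_in_profile_set[OF \<pi> mixed_policy_in_policy_set[OF assms]])
  have "?d s' = (1 - \<gamma>) * \<mu> s' + \<gamma> * transition ?\<rho> ?d s'" for s'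
  proof -
    define T where "T = transition ?\<rho> ?d s'"
    have T: "T = (1 - t) * transition \<pi> (state_occ \<pi>) s'
        + t * transition (upd_pol \<pi> i w) (state_occ (upd_pol \<pi> i w)) s'"
      unfolding T_def transition_upd_pol transition_upd_pol[of \<pi> i "\<pi> $ i", unfolded upd_pol_nth_self]
        mixed_policy_weighted[OF assms]
      by (simp only: distrib_right sum.distrib) (simp add: sum_distrib_left mult_ac)
    have "?d s' = (1 - t) * ((1 - \<gamma>) * \<mu> s' + \<gamma> * transition \<pi> (state_occ \<pi>) s')
        + t * ((1 - \<gamma>) * \<mu> s' + \<gamma> * transition (upd_pol \<pi> i w) (state_occ (upd_pol \<pi> i w)) s')"
      using state_occ_bellman[OF contractive_profile[OF \<pi>], of s']
        state_occ_bellman[OF contractive_profile[OF upd_pol_in_profile_set[OF \<pi> w]], of s']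
      by simp
    also have "\<dots> = (1 - \<gamma>) * \<mu> s' + \<gamma> * T" unfolding T by (simp add: algebra_simps)
    finally show ?thesis by (simp add: T_def)
  qed
  then show ?thesis by (rule state_occ_unique[OF contractive_profile[OF \<rho>], symmetric])
qed

lemma occ_measure_mixed:
  assumes "0 \<le> t" "t \<le> 1"
  shows "occ (upd_pol \<pi> i (mixed_policy \<pi> i w t)) = (1 - t) *\<^sub>R occ \<pi> + t *\<^sub>R occ (upd_pol \<pi> i w)"
proof -
  have \<rho>: "upd_pol \<pi> i (mixed_policy \<pi> i w t) \<in> profile_set A"
    by (rule upd_pol_in_profile_set[OF \<pi> mixed_policy_in_policy_set[OF assms]])
  have "occ (upd_pol \<pi> i (mixed_policy \<pi> i w t)) $ j $ s $ b
      = (1 - t) * occ \<pi> $ j $ s $ b + t * occ (upd_pol \<pi> i w) $ j $ s $ b" for j s b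
    unfolding occ_measure_profile[OF \<rho>] occ_measure_profile[OF \<pi>]
      occ_measure_profile[OF upd_pol_in_profile_set[OF \<pi> w]] state_occ_mixed[OF assms]
    using mixed_policy_weighted[OF assms, of s b]
    by (cases "j = i") (simp_all add: upd_pol_nth algebra_simps)
  then show ?thesis by (simp add: vec_eq_iff)
qed

lemma mixed_policy_dist_le:
  assumes "0 \<le> t" "t \<le> 1"
  shows "norm (mixed_policy \<pi> i w t - \<pi> $ i) \<le> t * norm (\<chi> s b.
     state_occ (upd_pol \<pi> i w) s / min (state_occ \<pi> s) (state_occ (upd_pol \<pi> i w) s)
     * (w $ s $ b - \<pi> $ i $ s $ b))" (is "_ \<le> t * norm ?V")
proof -
  have "\<bar>(mixed_policy \<pi> i w t - \<pi> $ i) $ s $ b\<bar> \<le> \<bar>(t *\<^sub>R ?V) $ s $ b\<bar>" for s b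
  proof -
    let ?d = "(1 - t) * state_occ \<pi> s + t * state_occ (upd_pol \<pi> i w) s"
    let ?m = "min (state_occ \<pi> s) (state_occ (upd_pol \<pi> i w) s)"
    have m: "0 < ?m" "?m \<le> ?d"
      using occ_pos[of s] min_le_convex_combination[OF assms] by auto
    have "(mixed_policy \<pi> i w t - \<pi> $ i) $ s $ b
        = t * (state_occ (upd_pol \<pi> i w) s * (w $ s $ b - \<pi> $ i $ s $ b)) / ?d"
      using mixing_weight_pos[OF assms, of s] by (simp add: mixed_policy_def field_simps)
    also have "\<bar>\<dots>\<bar> \<le> t * (state_occ (upd_pol \<pi> i w) s * \<bar>w $ s $ b - \<pi> $ i $ s $ b\<bar>) / ?m"
      using assms occ_pos[of s] m
      by (simp add: abs_mult) (intro divide_left_mono mult_nonneg_nonneg mult_pos_pos; simp)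
    finally show ?thesis using assms occ_pos[of s] m(1) by (simp add: abs_mult)
  qed
  then have "norm (mixed_policy \<pi> i w t - \<pi> $ i) \<le> norm (t *\<^sub>R ?V)"
    by (intro norm_le_componentwise_cart) simp
  then show ?thesis using assms by simp
qed

end

section \<open>Nash equilibria as variational inequalities\<close>

lemma variational_ineq_imp_best_response:
  assumes \<pi>: "\<pi> \<in> profile_set A" and w: "w \<in> policy_set (A i)"
    and occ_pos: "\<forall>\<rho>\<in>profile_set A. \<forall>s. 0 < state_occ \<rho> s"
    and concave: "concave_on (occ_set A) (\<lambda>l. F i (l, minus_pol i \<pi>))"
    and grad: "GDERIV (\<lambda>x. utility F A P \<mu> \<gamma> i (upd_pol \<pi> i x)) (\<pi> $ i) :> G"
    and vi: "\<forall>v\<in>policy_set (A i). G \<bullet> (v - \<pi> $ i) \<le> 0"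
  shows "utility F A P \<mu> \<gamma> i (upd_pol \<pi> i w) \<le> utility F A P \<mu> \<gamma> i \<pi>"
proof -
  let ?u = "\<lambda>x. utility F A P \<mu> \<gamma> i (upd_pol \<pi> i x)"
  let ?p = "mixed_policy \<pi> i w"
  have \<pi>': "upd_pol \<pi> i w \<in> profile_set A" by (rule upd_pol_in_profile_set[OF \<pi> w])
  have pos: "\<And>s. 0 < state_occ \<pi> s" "\<And>s. 0 < state_occ (upd_pol \<pi> i w) s"
    using occ_pos \<pi> \<pi>' by auto
  have in_occ_set: "occ \<rho> \<in> occ_set A" if "\<rho> \<in> profile_set A" for \<rho>
    using occ_measure_in_occ_set[OF that] occ_pos that less_imp_le by blast
  have u: "?u x = F i (occ (upd_pol \<pi> i x), minus_pol i \<pi>)" for x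
    by (simp add: utility_def)
  have "?u w - ?u (\<pi> $ i) \<le> 0"
  proof (rule gain_along_descent_path_le_0[OF grad])
    fix t :: real
    assume "0 < t" "t \<le> 1"
    then have t: "0 \<le> t" "t \<le> 1" by simp_all
    show "norm (?p t - \<pi> $ i) \<le> t * norm (\<chi> s b.
        state_occ (upd_pol \<pi> i w) s / min (state_occ \<pi> s) (state_occ (upd_pol \<pi> i w) s)
        * (w $ s $ b - \<pi> $ i $ s $ b))"
      by (rule mixed_policy_dist_le[OF \<pi> w pos t])
    show "(?p t - \<pi> $ i) \<bullet> G \<le> 0"
      using vi mixed_policy_in_policy_set[OF \<pi> w pos t] by (simp add: inner_commute)
    have "(1 - t) * ?u (\<pi> $ i) + t * ?u w \<le> ?u (?p t)"
      unfolding u unfolding occ_measure_mixed[OF \<pi> w pos t] upd_pol_nth_self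
      by (rule concave_onD[OF concave t in_occ_set[OF \<pi>] in_occ_set[OF \<pi>']])
    then show "t * (?u w - ?u (\<pi> $ i)) \<le> ?u (?p t) - ?u (\<pi> $ i)"
      by (simp add: algebra_simps)
  qed
  then show ?thesis by simp
qed

lemma nash_iff_variational_ineq:
  assumes \<pi>: "\<pi> \<in> profile_set A"
    and F_diff: "\<forall>i. F i differentiable at (occ \<pi>, minus_pol i \<pi>)"
    and concave: "\<forall>i. concave_on (occ_set A) (\<lambda>l. F i (l, minus_pol i \<pi>))"
    and occ_pos: "\<forall>\<rho>\<in>profile_set A. \<forall>s. 0 < state_occ \<rho> s"
  shows "is_nash F A P \<mu> \<gamma> \<pi> \<longleftrightarrow>
    (\<forall>i. \<forall>v\<in>policy_set (A i). partial_grad F A P \<mu> \<gamma> i \<pi> \<bullet> (v - \<pi> $ i) \<le> 0)"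
proof -
  have grad: "GDERIV (\<lambda>x. utility F A P \<mu> \<gamma> i (upd_pol \<pi> i x)) (\<pi> $ i) :> partial_grad F A P \<mu> \<gamma> i \<pi>"
    for i using utility_has_partial_grad[OF \<pi>] F_diff by blast
  have policy: "\<pi> $ i \<in> policy_set (A i)" for i using \<pi> by (simp add: profile_set_iff)
  show ?thesis
    unfolding is_nash_def
    using gderiv_inner_le_0_at_max_on_convex[OF convex_policy_set policy _ grad]
      variational_ineq_imp_best_response[OF \<pi> _ occ_pos concave[rule_format] grad]
    by (metis upd_pol_nth_self)
qed

end

theorem theorem1:
  fixes A :: "'n::finite \<Rightarrow> 'a::finite set"
    and P :: "'s::finite \<Rightarrow> ('n \<Rightarrow> 'a) \<Rightarrow> 's \<Rightarrow> real"
    and \<mu> :: "'s \<Rightarrow> real" and \<gamma> :: real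
    and F :: "'n \<Rightarrow> (real^'a^'s^'n) \<times> (real^'a^'s^'n) \<Rightarrow> real"
    and \<pi>s :: "real^'a^'s^'n"
  assumes gamma: "0 < \<gamma>" "\<gamma> < 1"
    and mu: "\<forall>s. 0 \<le> \<mu> s" "(\<Sum>s\<in>UNIV. \<mu> s) = 1"
    and P: "\<forall>s. \<forall>a\<in>joint_actions A. (\<forall>s'. 0 \<le> P s a s') \<and> (\<Sum>s'\<in>UNIV. P s a s') = 1"
    and F_diff: "\<forall>i. \<forall>l\<in>occ_set A. \<forall>\<pi>\<in>profile_set A. F i differentiable at (l, minus_pol i \<pi>)"
    and A1: "\<forall>i. \<forall>\<pi>\<in>profile_set A. concave_on (occ_set A) (\<lambda>l. F i (l, minus_pol i \<pi>))"
    and A2: "\<forall>\<pi>\<in>profile_set A. \<forall>s. disc_state_occ A P \<mu> \<gamma> \<pi> s > 0"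
    and mem: "\<pi>s \<in> profile_set A"
  shows "(is_nash F A P \<mu> \<gamma> \<pi>s \<longleftrightarrow>
            (\<forall>\<eta>>0. \<pi>s = closest_point (profile_set A) (\<pi>s + \<eta> *\<^sub>R grad_field F A P \<mu> \<gamma> \<pi>s)))
       \<and> (is_nash F A P \<mu> \<gamma> \<pi>s \<longleftrightarrow>
            (\<forall>i. \<forall>\<eta>>0. \<pi>s$i = closest_point (policy_set (A i))
                                 (\<pi>s$i + \<eta> *\<^sub>R partial_grad F A P \<mu> \<gamma> i \<pi>s)))"
proof -
  interpret markov_game A P \<mu> \<gamma> using gamma mu P by unfold_locales
  let ?vi = "\<forall>i. \<forall>v\<in>policy_set (A i). partial_grad F A P \<mu> \<gamma> i \<pi>s \<bullet> (v - \<pi>s $ i) \<le> 0"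
  have "occ \<pi>s \<in> occ_set A"
    using occ_measure_in_occ_set[OF mem] A2 mem less_imp_le by blast
  then have nash: "is_nash F A P \<mu> \<gamma> \<pi>s \<longleftrightarrow> ?vi"
    using nash_iff_variational_ineq[OF mem] F_diff A1 A2 mem by blast
  have policy: "\<forall>i. \<pi>s $ i \<in> policy_set (A i)" using mem by (simp add: profile_set_iff)
  have "(\<forall>\<eta>>0. \<pi>s = closest_point (profile_set A) (\<pi>s + \<eta> *\<^sub>R grad_field F A P \<mu> \<gamma> \<pi>s)) \<longleftrightarrow> ?vi"
    unfolding closest_point_fixed_iff[OF convex_profile_set closed_profile_set mem]
    unfolding profile_set_def
    using inner_nonpos_on_vector_box_iff[OF policy] by (simp add: grad_field_def)
  moreover have "(\<forall>i. \<forall>\<eta>>0. \<pi>s $ i = closest_point (policy_set (A i))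
                    (\<pi>s $ i + \<eta> *\<^sub>R partial_grad F A P \<mu> \<gamma> i \<pi>s)) \<longleftrightarrow> ?vi"
    using closest_point_fixed_iff[OF convex_policy_set closed_policy_set policy[rule_format]] by simp
  ultimately show ?thesis using nash by simp
qed

end
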